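(* For every planar forest $F$: (1) $B^+(f_F)=f_{\bullet F}$, where $\bullet F$ is the forest obtained by placing the one-vertex tree $\bullet$ to the left of $F$; (2) $\gamma(f_F)=0$ if $F$ is not a tree, and $\gamma(f_F)=f_{B^-(F)}$ if $F$ is a tree, where $B^-(F)$ is the forest obtained by deleting the root of $F$; (3) $\Delta(f_F)=\sum_{F_1,F_2}f_{F_2}\otimes f_{F_1}$, the sum over all pairs of planar forests $(F_1,F_2)$ with $F_1F_2=F$.
   Context: Let $K$ be a field. Planar rooted trees have their children linearly ordered left to right; a planar forest is a finite, possibly empty, sequence $t_1\cdots t_n$ of planar rooted trees ($1$ = empty forest). $\mathcal{H}$ is the free associative unital $K$-algebra on planar rooted trees, with basis the planar forests and product concatenation, graded by weight (number of vertices). $B^+(F)$ is the tree obtained by grafting the trees of $F$ (in order) on a new common root. $\varepsilon(F)=\delta_{F,1}$. $\Delta$ is the unique linear map with $\Delta(1)=1\otimes1$, $\Delta(xy)=(x\otimes1)\Delta(y)+\Delta(x)(1\otimes y)-x\otimes y$, $\Delta(B^+(x))=B^+(x)\otimes 1+(\mathrm{Id}\otimes B^+)\Delta(x)$. $\gamma:\mathcal{H}\to\mathcal{H}$ is linear with $\gamma(t_1\cdots t_n)=\delta_{t_1,\bullet}t_2\cdots t_n$ ($\bullet$ the one-vertex tree) and $\gamma(1)=0$. $\langle-,-\rangle$ is the unique bilinear form on $\mathcal{H}$ with $\langle1,x\rangle=\varepsilon(x)$, $\langle xy,z\rangle=\langle y\otimes x,\Delta(z)\rangle$ (with $\langle a\otimes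 b,c\otimes d\rangle=\langle a,c\rangle\langle b,d\rangle$) and $\langle B^+(x),y\rangle=\langle x,\gamma(y)\rangle$; it is symmetric, non-degenerate, and forests of different weights are orthogonal. $(f_F)_F$ is the dual basis of the basis of forests: $f_F\in\mathcal{H}$ with $\langle f_F,G\rangle=\delta_{F,G}$ for all planar forests $G$. *)

theory Defs
  imports Main
begin

text \<open>Planar rooted trees: a root with an ordered (left-to-right) list of subtrees.
  Planar forests are lists of planar trees; the empty list is the empty forest 1.\<close>
datatype ptree = Node "ptree list"

type_synonym forest = "ptree list"

definition dot :: ptree where "dot = Node []"

fun children :: "ptree \<Rightarrow> forest" where "children (Node ts) = ts"

text \<open>Elements of H are finitely supported coefficient functions on forests;
  elements of H \<otimes> H are finitely supported functions on pairs of forests.\<close>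
definition supp :: "('a \<Rightarrow> 'k::zero) \<Rightarrow> 'a set" where
  "supp v = {x. v x \<noteq> 0}"

definition fin :: "('a \<Rightarrow> 'k::zero) \<Rightarrow> bool" where
  "fin v \<longleftrightarrow> finite (supp v)"

definition basis :: "'a \<Rightarrow> ('a \<Rightarrow> 'k::{zero,one})" where
  "basis x = (\<lambda>y. if y = x then 1 else 0)"

definition push :: "('a \<Rightarrow> 'b) \<Rightarrow> ('a \<Rightarrow> 'k::comm_monoid_add) \<Rightarrow> ('b \<Rightarrow> 'k)" where
  "push g v = (\<lambda>y. \<Sum>x\<in>{x. v x \<noteq> 0 \<and> g x = y}. v x)"

definition lin :: "('a \<Rightarrow> ('b \<Rightarrow> 'k::semiring_0)) \<Rightarrow> ('a \<Rightarrow> 'k) \<Rightarrow> ('b \<Rightarrow> 'k)" where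
  "lin \<phi> v = (\<lambda>y. \<Sum>x\<in>supp v. v x * \<phi> x y)"

text \<open>Coproduct on basis forests, following the defining recursion:
  Delta(1) = 1 \<otimes> 1,
  Delta(B+(x)) = B+(x) \<otimes> 1 + (Id \<otimes> B+) Delta(x),
  Delta(xy) = (x \<otimes> 1) Delta(y) + Delta(x)(1 \<otimes> y) - x \<otimes> y  (with x the first tree).\<close>
function deltaB :: "forest \<Rightarrow> (forest \<times> forest \<Rightarrow> 'k::comm_ring_1)" where
  "deltaB [] = basis ([], [])"
| "deltaB [Node ts] =
     (\<lambda>p. basis ([Node ts], []) p + push (\<lambda>(a, b). (a, [Node b])) (deltaB ts) p)"
| "deltaB (t # u # rest) =
     (\<lambda>p. push (\<lambda>(a, b). ([t] @ a, b)) (deltaB (u # rest)) p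
        + push (\<lambda>(a, b). (a, b @ (u # rest))) (deltaB [t]) p
        - basis ([t], u # rest) p)"
  by pat_completeness auto
termination
  by (relation "measure (size_list size)") auto

definition Delta :: "(forest \<Rightarrow> 'k::comm_ring_1) \<Rightarrow> (forest \<times> forest \<Rightarrow> 'k)" where
  "Delta v = lin deltaB v"

definition Bplus :: "(forest \<Rightarrow> 'k::comm_ring_1) \<Rightarrow> (forest \<Rightarrow> 'k)" where
  "Bplus v = push (\<lambda>F. [Node F]) v"

fun gammaB :: "forest \<Rightarrow> (forest \<Rightarrow> 'k::comm_ring_1)" where
  "gammaB [] = (\<lambda>_. 0)"
| "gammaB (t # G) = (if t = dot then basis G else (\<lambda>_. 0))"

definition gamma :: "(forest \<Rightarrow> 'k::comm_ring_1) \<Rightarrow> (forest \<Rightarrow> 'k)" where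
  "gamma v = lin gammaB v"

text \<open>The pairing on basis forests, by the defining recursion in the first argument:
  <1, G> = eps(G), <B+(x), G> = <x, gamma(G)>, <xy, G> = <y \<otimes> x, Delta(G)>
  (with x the first tree of the forest).\<close>
function pairB :: "forest \<Rightarrow> (forest \<Rightarrow> 'k::comm_ring_1)" where
  "pairB [] = (\<lambda>G. if G = [] then 1 else 0)"
| "pairB [Node ts] = (let p = pairB ts in
     (\<lambda>G. (case G of [] \<Rightarrow> 0 | s # G' \<Rightarrow> if s = dot then p G' else 0)))"
| "pairB (t # u # rest) = (let py = pairB (u # rest); px = pairB [t] in
     (\<lambda>G. \<Sum>q\<in>supp (deltaB G :: forest \<times> forest \<Rightarrow> 'k).
            deltaB G q * (py (fst q) * px (snd q))))"
  by pat_completeness auto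
termination
  by (relation "measure (size_list size)") auto

definition pair :: "(forest \<Rightarrow> 'k::comm_ring_1) \<Rightarrow> (forest \<Rightarrow> 'k) \<Rightarrow> 'k" where
  "pair v w = (\<Sum>x\<in>supp v. \<Sum>y\<in>supp w. v x * w y * pairB x y)"

definition fdual :: "forest \<Rightarrow> (forest \<Rightarrow> 'k::field)" where
  "fdual F = (THE v. fin v \<and> (\<forall>G. pair v (basis G) = (if G = F then 1 else 0)))"

end

theory Submission
  imports Defs
begin

text \<open>
  Number the vertices of a forest in postorder.  The recursion defining \<open>\<Delta>\<close> makes \<open>\<Delta>(G)\<close> the
  sum of the cuts \<open>G' \<otimes> G''\<close> of \<open>G\<close> into its first \<open>k\<close> vertices and the remaining ones, and the
  recursion defining the pairing then gives \<open>\<langle>x z, G\<rangle> = \<langle>z, G'\<rangle> \<langle>x, G''\<rangle>\<close> for the cut with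
  \<open>|G'| = |z|\<close>.  This identity, applied on both sides, shows that the pairing is symmetric.

  Every functional \<open>G \<mapsto> \<delta>\<^sub>G\<^sub>,\<^sub>z\<close> is of the form \<open>\<langle>v, -\<rangle>\<close>, by induction on the weight of \<open>z\<close>
  and then on the weight of its first tree: if that tree is \<open>\<bullet>\<close>, apply \<open>B\<^sup>+\<close> to a representative
  for the rest; if \<open>z = B\<^sup>+(cs) F\<close> with \<open>cs \<noteq> 1\<close>, the product of the representatives of \<open>\<bullet> F\<close> and
  \<open>cs\<close> pairs to 1 with \<open>z\<close> and to 0 with all other forests except some of the same weight with
  a smaller first tree.  Hence the pairing is non-degenerate, \<open>f\<^sub>F\<close> exists and \<open>f\<^sub>F(G) = f\<^sub>G(F)\<close>.

  The three identities are checked by pairing with forests: (1) is \<open>\<langle>B\<^sup>+(x), G\<rangle> = \<langle>x, \<gamma>(G)\<rangle>\<close>,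
  (2) follows from (1) by symmetry, and by the cut description of \<open>\<Delta>\<close> the coefficient of
  \<open>a \<otimes> b\<close> in \<open>\<Delta>(f\<^sub>F)\<close> is the coefficient of \<open>F\<close> in the product \<open>f\<^sub>b f\<^sub>a\<close>.
\<close>

fun tree_weight :: "ptree \<Rightarrow> nat" and weight :: "forest \<Rightarrow> nat" where
  "tree_weight (Node ts) = Suc (weight ts)"
| "weight [] = 0"
| "weight (t # ts) = tree_weight t + weight ts"

lemma tree_weight_pos [simp]: "0 < tree_weight t"
  by (cases t) auto

lemma tree_weight_dot [simp]: "tree_weight dot = 1"
  by (simp add: dot_def)

lemma weight_append [simp]: "weight (F @ G) = weight F + weight G"
  by (induction F) auto

lemma weight_eq_0_iff [simp]: "weight F = 0 \<longleftrightarrow> F = []"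
  by (cases F) auto

lemma finite_weight_le: "finite {F. weight F \<le> n}"
proof (induction n)
  case 0
  then show ?case by simp
next
  case (Suc n)
  let ?S = "{F. weight F \<le> n}"
  have "{F. weight F \<le> Suc n} \<subseteq> insert [] ((\<lambda>(cs, F). Node cs # F) ` (?S \<times> ?S))"
  proof
    fix F assume F: "F \<in> {F. weight F \<le> Suc n}"
    show "F \<in> insert [] ((\<lambda>(cs, F). Node cs # F) ` (?S \<times> ?S))"
    proof (cases F)
      case (Cons t F')
      obtain cs where "t = Node cs" by (cases t)
      with F Cons show ?thesis by (auto intro!: image_eqI[where x = "(cs, F')"])
    qed simp
  qed
  moreover have "finite (insert [] ((\<lambda>(cs, F). Node cs # F) ` (?S \<times> ?S)))"
    using Suc by simp
  ultimately show ?case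
    by (rule finite_subset)
qed

text \<open>\<open>vtake k F\<close> consists of the first \<open>k\<close> vertices of \<open>F\<close> in postorder, \<open>vdrop k F\<close> of the
  remaining ones; both are again forests.\<close>
fun vtake :: "nat \<Rightarrow> forest \<Rightarrow> forest" where
  "vtake k [] = []"
| "vtake k (Node cs # F) =
     (if tree_weight (Node cs) \<le> k then Node cs # vtake (k - tree_weight (Node cs)) F
      else vtake k cs)"

fun vdrop :: "nat \<Rightarrow> forest \<Rightarrow> forest" where
  "vdrop k [] = []"
| "vdrop k (Node cs # F) =
     (if tree_weight (Node cs) \<le> k then vdrop (k - tree_weight (Node cs)) F
      else Node (vdrop k cs) # F)"

lemma weight_vtake [simp]: "weight (vtake k F) = min k (weight F)"
  by (induction k F rule: vtake.induct) auto

lemma weight_vdrop [simp]: "weight (vdrop k F) = weight F - k"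
  by (induction k F rule: vdrop.induct) auto

lemma vtake_all: "weight F \<le> k \<Longrightarrow> vtake k F = F"
  by (induction k F rule: vtake.induct) auto

lemma vdrop_all: "weight F \<le> k \<Longrightarrow> vdrop k F = []"
  by (metis diff_is_0_eq weight_eq_0_iff weight_vdrop)

lemma vtake_0 [simp]: "vtake 0 F = []"
  by (metis weight_eq_0_iff weight_vtake min_0L)

lemma vdrop_0 [simp]: "vdrop 0 F = F"
  by (induction "0::nat" F rule: vdrop.induct) auto

lemma vtake_append:
  "vtake k (F @ G) = (if k \<le> weight F then vtake k F else F @ vtake (k - weight F) G)"
  by (induction k F rule: vtake.induct) (auto simp: vtake_all)

lemma vdrop_append:
  "vdrop k (F @ G) = (if k \<le> weight F then vdrop k F @ G else vdrop (k - weight F) G)"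
  by (induction k F rule: vdrop.induct) (auto simp: vdrop_all)

lemma vtake_Cons_le: "k \<le> tree_weight t \<Longrightarrow> vtake k (t # F) = vtake k [t]"
  using vtake_append[of k "[t]" F] by simp

lemma vdrop_Cons_le: "k \<le> tree_weight t \<Longrightarrow> vdrop k (t # F) = vdrop k [t] @ F"
  using vdrop_append[of k "[t]" F] by simp

lemma vtake_Cons_add [simp]: "vtake (tree_weight t + j) (t # F) = t # vtake j F"
  using vtake_append[of "tree_weight t + j" "[t]" F] by (simp add: vtake_all)

lemma vdrop_Cons_add [simp]: "vdrop (tree_weight t + j) (t # F) = vdrop j F"
  using vdrop_append[of "tree_weight t + j" "[t]" F] by (simp add: vdrop_all)

lemma vtake_vtake: "i \<le> j \<Longrightarrow> vtake i (vtake j F) = vtake i F"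
  by (induction j F arbitrary: i rule: vtake.induct) auto

lemma vdrop_vdrop: "vdrop j (vdrop i F) = vdrop (i + j) F"
  by (induction i F arbitrary: j rule: vdrop.induct) (auto simp: add.commute)

lemma vdrop_vtake: "vdrop i (vtake (i + j) F) = vtake j (vdrop i F)"
proof (induction i F arbitrary: j rule: vdrop.induct)
  case (2 k cs F)
  then show ?case
    by (cases "tree_weight (Node cs) \<le> k"; cases "tree_weight (Node cs) \<le> k + j")
      (auto simp: add.commute add.left_commute)
qed simp

definition cuts :: "forest \<Rightarrow> (forest \<times> forest) set" where
  "cuts G = (\<lambda>k. (vtake k G, vdrop k G)) ` {..weight G}"

lemma cut_in_cuts: "k \<le> weight G \<Longrightarrow> (vtake k G, vdrop k G) \<in> cuts G"
  by (auto simp: cuts_def)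

lemma inj_on_cut: "inj_on (\<lambda>k. (vtake k G, vdrop k G)) {..weight G}"
proof (rule inj_onI)
  fix i j assume "i \<in> {..weight G}" "j \<in> {..weight G}"
    and "(vtake i G, vdrop i G) = (vtake j G, vdrop j G)"
  then show "i = j"
    by (metis atMost_iff fst_conv min.absorb1 weight_vtake)
qed

lemma cuts_Node:
  "cuts [Node ts] = insert ([Node ts], []) ((\<lambda>(a, b). (a, [Node b])) ` cuts ts)"
proof -
  have "cuts [Node ts] = insert ([Node ts], [])
      ((\<lambda>k. (vtake k [Node ts], vdrop k [Node ts])) ` {..weight ts})"
    by (simp add: cuts_def atMost_Suc vtake_all vdrop_all)
  also have "(\<lambda>k. (vtake k [Node ts], vdrop k [Node ts])) ` {..weight ts}
      = (\<lambda>k. (vtake k ts, [Node (vdrop k ts)])) ` {..weight ts}"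
    by (rule image_cong) simp_all
  finally show ?thesis
    by (simp add: cuts_def image_image)
qed

lemma cuts_Cons:
  "cuts (t # F) = (\<lambda>(a, b). (t # a, b)) ` cuts F \<union> (\<lambda>(a, b). (a, b @ F)) ` cuts [t]"
proof -
  have "{..weight (t # F)} = (\<lambda>j. tree_weight t + j) ` {..weight F} \<union> {..tree_weight t}"
  proof (intro equalityI subsetI)
    fix k assume "k \<in> {..weight (t # F)}"
    then show "k \<in> (\<lambda>j. tree_weight t + j) ` {..weight F} \<union> {..tree_weight t}"
      by (cases "k \<le> tree_weight t") (auto intro!: image_eqI[where x = "k - tree_weight t"])
  next
    fix k assume "k \<in> (\<lambda>j. tree_weight t + j) ` {..weight F} \<union> {..tree_weight t}"
    then show "k \<in> {..weight (t # F)}"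
      by (elim UnE imageE) simp_all
  qed
  then have "cuts (t # F) = (\<lambda>j. (t # vtake j F, vdrop j F)) ` {..weight F}
      \<union> (\<lambda>k. (vtake k (t # F), vdrop k (t # F))) ` {..tree_weight t}"
    by (simp add: cuts_def image_Un image_image)
  moreover have "(\<lambda>k. (vtake k (t # F), vdrop k (t # F))) ` {..tree_weight t}
      = (\<lambda>k. (vtake k [t], vdrop k [t] @ F)) ` {..tree_weight t}"
    by (rule image_cong) (simp_all add: vtake_Cons_le[of _ t F] vdrop_Cons_le[of _ t F])
  moreover have "\<dots> = (\<lambda>(a, b). (a, b @ F)) ` cuts [t]"
    by (simp add: cuts_def image_image)
  moreover have "(\<lambda>j. (t # vtake j F, vdrop j F)) ` {..weight F} = (\<lambda>(a, b). (t # a, b)) ` cuts F"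
    by (simp add: cuts_def image_image)
  ultimately show ?thesis
    by simp
qed

lemma cuts_Cons_overlap:
  "(\<lambda>(a, b). (t # a, b)) ` cuts F \<inter> (\<lambda>(a, b). (a, b @ F)) ` cuts [t] = {([t], F)}"
proof
  show "{([t], F)} \<subseteq> (\<lambda>(a, b). (t # a, b)) ` cuts F \<inter> (\<lambda>(a, b). (a, b @ F)) ` cuts [t]"
    using image_eqI[OF _ cut_in_cuts[of 0 F], of "([t], F)" "\<lambda>(a, b). (t # a, b)"]
      image_eqI[OF _ cut_in_cuts[of "tree_weight t" "[t]"], of "([t], F)" "\<lambda>(a, b). (a, b @ F)"]
    by (simp add: vtake_all vdrop_all)
next
  show "(\<lambda>(a, b). (t # a, b)) ` cuts F \<inter> (\<lambda>(a, b). (a, b @ F)) ` cuts [t] \<subseteq> {([t], F)}"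
  proof
    fix p assume "p \<in> (\<lambda>(a, b). (t # a, b)) ` cuts F \<inter> (\<lambda>(a, b). (a, b @ F)) ` cuts [t]"
    then obtain j k where j: "j \<le> weight F" "p = (t # vtake j F, vdrop j F)"
      and k: "k \<le> tree_weight t" "p = (vtake k [t], vdrop k [t] @ F)"
      by (auto simp: cuts_def)
    from j k have "vtake k [t] = t # vtake j F"
      by simp
    from arg_cong[OF this, of weight] j(1) have "min k (tree_weight t) = tree_weight t + j"
      by simp
    with k(1) have "j = 0"
      by auto
    with j show "p \<in> {([t], F)}"
      by simp
  qed
qed

lemma push_of_bool:
  assumes "inj_on g S"
  shows "push g (\<lambda>x. of_bool (x \<in> S)) = (\<lambda>y. of_bool (y \<in> g ` S) :: 'k::comm_semiring_1)"
proof
  fix y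
  have "{x. (of_bool (x \<in> S) :: 'k) \<noteq> 0 \<and> g x = y} = {x \<in> S. g x = y}"
    by auto
  moreover have "{x \<in> S. g x = y} = (if y \<in> g ` S then {the_inv_into S g y} else {})"
    using assms by (auto simp: the_inv_into_f_f inj_on_def)
  ultimately show "push g (\<lambda>x. of_bool (x \<in> S)) y = (of_bool (y \<in> g ` S) :: 'k)"
    by (simp add: push_def)
qed

lemma basis_eq_of_bool: "basis x = (\<lambda>y. of_bool (y = x))"
  by (simp add: basis_def fun_eq_iff)

lemma of_bool_mem_Un:
  "(of_bool (x \<in> A \<union> B) :: 'k::comm_ring_1)
     = of_bool (x \<in> A) + of_bool (x \<in> B) - of_bool (x \<in> A \<inter> B)"
  by (cases "x \<in> A"; cases "x \<in> B") simp_all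

lemma deltaB_eq_cuts: "(deltaB G :: _ \<Rightarrow> 'k::comm_ring_1) = (\<lambda>p. of_bool (p \<in> cuts G))"
proof (induction G rule: deltaB.induct)
  case 1
  then show ?case
    by (auto simp: cuts_def basis_def)
next
  case (2 ts)
  let ?C = "(\<lambda>(a, b). (a, [Node b])) ` cuts ts"
  have inj: "inj_on (\<lambda>(a, b). (a, [Node b])) (cuts ts)"
    by (auto simp: inj_on_def)
  have "(deltaB [Node ts] :: _ \<Rightarrow> 'k) = (\<lambda>p. of_bool (p = ([Node ts], [])) + of_bool (p \<in> ?C))"
    unfolding deltaB.simps(2) 2 push_of_bool[OF inj] basis_eq_of_bool ..
  also have "\<dots> = (\<lambda>p. of_bool (p \<in> insert ([Node ts], []) ?C))"
  proof
    fix p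
    have "([Node ts], []) \<notin> ?C"
      by auto
    then show "of_bool (p = ([Node ts], [])) + of_bool (p \<in> ?C) = (of_bool (p \<in> insert ([Node ts], []) ?C) :: 'k)"
      by (cases "p = ([Node ts], [])") simp_all
  qed
  finally show ?case
    by (simp only: cuts_Node)
next
  case (3 t u F)
  let ?A = "(\<lambda>(a, b). (t # a, b)) ` cuts (u # F)"
  let ?B = "(\<lambda>(a, b). (a, b @ u # F)) ` cuts [t]"
  have inj: "inj_on (\<lambda>(a, b). (t # a, b)) (cuts (u # F))"
    "inj_on (\<lambda>(a, b). (a, b @ u # F)) (cuts [t])"
    by (auto simp: inj_on_def)
  have "(deltaB (t # u # F) :: _ \<Rightarrow> 'k) = (\<lambda>p. of_bool (p \<in> ?A) + of_bool (p \<in> ?B) - basis ([t], u # F) p)"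
    unfolding deltaB.simps(3) 3 append.simps push_of_bool[OF inj(1)] push_of_bool[OF inj(2)] ..
  also have "\<dots> = (\<lambda>p. of_bool (p \<in> ?A) + of_bool (p \<in> ?B) - of_bool (p \<in> ?A \<inter> ?B))"
    by (simp only: cuts_Cons_overlap basis_eq_of_bool singleton_iff)
  also have "\<dots> = (\<lambda>p. of_bool (p \<in> ?A \<union> ?B))"
    by (simp only: of_bool_mem_Un)
  finally show ?case
    by (simp only: cuts_Cons[of t "u # F"])
qed

text \<open>The recursion scheme of \<open>deltaB\<close> and \<open>pairB\<close>; \<open>pairB.induct\<close> itself is awkward to use
  because its step case quantifies over the let-bound value \<open>pairB (u # F)\<close>.\<close>
lemma forest_induct [case_names Nil Node Cons]:
  "P [] \<Longrightarrow> (\<And>ts. P ts \<Longrightarrow> P [Node ts]) \<Longrightarrow> (\<And>t u F. P [t] \<Longrightarrow> P (u # F) \<Longrightarrow> P (t # u # F))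
    \<Longrightarrow> P F"
  by (rule deltaB.induct) blast+

lemma forest_cases [case_names Nil Node Cons]:
  obtains "F = []" | ts where "F = [Node ts]" | t u F' where "F = t # u # F'"
  by (metis neq_Nil_conv ptree.exhaust)

lemma pairB_Node:
  "pairB [Node a] G = (case G of [] \<Rightarrow> 0 | s # G' \<Rightarrow> if s = dot then pairB a G' else 0)"
  by (simp add: Let_def)

lemma pairB_Cons_Cons_sum:
  "(pairB (t # u # F) G :: 'k::comm_ring_1)
     = (\<Sum>k\<le>weight G. pairB (u # F) (vtake k G) * pairB [t] (vdrop k G))"
proof -
  have "(pairB (t # u # F) G :: 'k)
      = (\<Sum>q\<in>cuts G. pairB (u # F) (fst q) * pairB [t] (snd q))"
    by (auto simp: Let_def deltaB_eq_cuts supp_def intro: sum.cong)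
  also have "\<dots> = (\<Sum>k\<le>weight G. pairB (u # F) (vtake k G) * pairB [t] (vdrop k G))"
    by (simp add: cuts_def sum.reindex[OF inj_on_cut])
  finally show ?thesis .
qed

lemma pairB_weight: "(pairB x G :: 'k::comm_ring_1) \<noteq> 0 \<Longrightarrow> weight x = weight G"
proof (induction x arbitrary: G rule: forest_induct)
  case Nil
  then show ?case
    by (simp split: if_splits)
next
  case (Node ts G)
  then show ?case
    by (auto simp: pairB_Node dot_def split: list.splits if_splits)
next
  case (Cons t u F G)
  from Cons.prems obtain k where k: "k \<le> weight G"
    and "(pairB (u # F) (vtake k G) * pairB [t] (vdrop k G) :: 'k) \<noteq> 0"
    unfolding pairB_Cons_Cons_sum by (auto elim: sum.not_neutral_contains_not_neutral)
  then have "weight (u # F) = weight (vtake k G)" "weight [t] = weight (vdrop k G)"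
    using Cons.IH by (metis mult_zero_left mult_zero_right)+
  with k show ?case
    by simp
qed

lemma pairB_eq_0: "weight x \<noteq> weight G \<Longrightarrow> (pairB x G :: 'k::comm_ring_1) = 0"
  using pairB_weight by blast

lemma pairB_Cons:
  "(pairB (t # F) G :: 'k::comm_ring_1) = pairB F (vtake (weight F) G) * pairB [t] (vdrop (weight F) G)"
proof (cases F)
  case (Cons u F')
  have "(pairB (t # F) G :: 'k)
      = (\<Sum>k\<le>weight G. if k = weight F then pairB F (vtake k G) * pairB [t] (vdrop k G) else 0)"
    unfolding Cons pairB_Cons_Cons_sum
    by (rule sum.cong) (simp_all add: pairB_eq_0)
  then show ?thesis
    by (auto simp: vtake_all pairB_eq_0)
qed simp

lemma pairB_append:
  "(pairB (F @ G) H :: 'k::comm_ring_1) = pairB G (vtake (weight G) H) * pairB F (vdrop (weight G) H)"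
proof (induction F arbitrary: H)
  case Nil
  show ?case
  proof (cases "weight H \<le> weight G")
    case True
    then show ?thesis
      by (cases "weight H = weight G") (simp_all add: vtake_all vdrop_all pairB_eq_0)
  next
    case False
    then have "vdrop (weight G) H \<noteq> []"
      by (metis weight_eq_0_iff weight_vdrop zero_less_diff not_le less_irrefl)
    with False show ?thesis
      by (simp add: pairB_eq_0)
  qed
next
  case (Cons t F)
  let ?H = "vdrop (weight G) H"
  have "(pairB ((t # F) @ G) H :: 'k)
      = pairB (F @ G) (vtake (weight G + weight F) H) * pairB [t] (vdrop (weight G + weight F) H)"
    using pairB_Cons[of t "F @ G" H] by (simp add: add.commute)
  also have "\<dots> = pairB G (vtake (weight G) H) * pairB F (vtake (weight F) ?H) * pairB [t] (vdrop (weight F) ?H)"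
    by (simp add: Cons vtake_vtake vdrop_vtake vdrop_vdrop)
  also have "\<dots> = pairB G (vtake (weight G) H) * pairB (t # F) ?H"
    by (simp add: pairB_Cons[of t F ?H] mult.assoc)
  finally show ?case .
qed

lemma pairB_cut_product_eq_0:
  assumes "weight F \<noteq> weight G + weight H"
  shows "(pairB (vtake (weight H) F) H * pairB (vdrop (weight H) F) G :: 'k::comm_ring_1) = 0"
proof (rule ccontr)
  assume "(pairB (vtake (weight H) F) H * pairB (vdrop (weight H) F) G :: 'k) \<noteq> 0"
  then have "weight (vtake (weight H) F) = weight H" "weight (vdrop (weight H) F) = weight G"
    by (metis mult_zero_left mult_zero_right pairB_weight)+
  with assms show False
    by simp
qed

lemma pairB_append_right_Cons:
  assumes r: "\<And>X Y. (pairB [r] (X @ Y) :: 'k::comm_ring_1)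
      = pairB (vtake (weight Y) [r]) Y * pairB (vdrop (weight Y) [r]) X"
    and F: "\<And>X Y. (pairB F (X @ Y) :: 'k) = pairB (vtake (weight Y) F) Y * pairB (vdrop (weight Y) F) X"
    and weight: "weight (r # F) = weight G + weight H"
  shows "(pairB (r # F) (G @ H) :: 'k)
    = pairB (vtake (weight H) (r # F)) H * pairB (vdrop (weight H) (r # F)) G"
proof -
  let ?m = "weight F"
  have split: "(pairB (r # F) (G @ H) :: 'k) = pairB F (vtake ?m (G @ H)) * pairB [r] (vdrop ?m (G @ H))"
    by (rule pairB_Cons)
  show ?thesis
  proof (cases "?m \<le> weight G")
    case True
    with weight have H: "weight H \<le> tree_weight r"
      by simp
    have "(pairB (r # F) (G @ H) :: 'k) = pairB F (vtake ?m G) * pairB [r] (vdrop ?m G @ H)"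
      using True by (simp add: split vtake_append vdrop_append)
    also have "\<dots> = pairB F (vtake ?m G) * (pairB (vtake (weight H) [r]) H
        * pairB (vdrop (weight H) [r]) (vdrop ?m G))"
      by (simp only: r)
    also have "\<dots> = pairB (vtake (weight H) [r]) H * pairB (vdrop (weight H) [r] @ F) G"
      by (simp only: pairB_append ac_simps)
    also have "\<dots> = pairB (vtake (weight H) (r # F)) H * pairB (vdrop (weight H) (r # F)) G"
      using H by (simp only: vtake_Cons_le[of _ r F] vdrop_Cons_le[of _ r F])
    finally show ?thesis .
  next
    case False
    define j where "j = ?m - weight G"
    with weight False have H: "weight H = tree_weight r + j"
      by simp
    then have j: "weight (vtake j H) = j" "weight (vtake j F) = j"
      using False by (simp_all add: j_def)
    have "(pairB (r # F) (G @ H) :: 'k) = pairB F (G @ vtake j H) * pairB [r] (vdrop j H)"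
      using False by (simp add: split vtake_append vdrop_append j_def)
    also have "\<dots> = pairB (vtake j F) (vtake j H) * pairB (vdrop j F) G * pairB [r] (vdrop j H)"
      by (simp only: F j(1))
    also have "\<dots> = pairB (r # vtake j F) H * pairB (vdrop j F) G"
      by (simp only: pairB_Cons[of r "vtake j F" H] j(2) ac_simps)
    also have "\<dots> = pairB (vtake (weight H) (r # F)) H * pairB (vdrop (weight H) (r # F)) G"
      by (simp only: H vtake_Cons_add vdrop_Cons_add)
    finally show ?thesis .
  qed
qed

lemma pairB_append_right:
  "(pairB F (G @ H) :: 'k::comm_ring_1) = pairB (vtake (weight H) F) H * pairB (vdrop (weight H) F) G"
proof (induction "weight F" arbitrary: F G H rule: less_induct)
  case less
  show ?case
  proof (cases "weight F = weight G + weight H")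
    case False
    then show ?thesis
      by (simp add: pairB_eq_0 pairB_cut_product_eq_0)
  next
    case weight: True
    show ?thesis
    proof (cases F rule: forest_cases)
      case Nil
      with weight show ?thesis
        by simp
    next
      case (Node a)
      show ?thesis
      proof (cases G)
        case Nil
        with weight show ?thesis
          by (simp add: vtake_all vdrop_all)
      next
        case (Cons s G')
        with weight Node have "Suc (weight a) = tree_weight s + weight G' + weight H"
          by simp
        with tree_weight_pos[of s] have "weight H \<le> weight a"
          by linarith
        with Node Cons less.hyps[of a G' H] show ?thesis
          by (simp add: pairB_Node)
      qed
    next
      case (Cons r u F')
      have r: "(pairB [r] (X @ Y) :: 'k) = pairB (vtake (weight Y) [r]) Y * pairB (vdrop (weight Y) [r]) X"
        and u: "(pairB (u # F') (X @ Y) :: 'k)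
          = pairB (vtake (weight Y) (u # F')) Y * pairB (vdrop (weight Y) (u # F')) X" for X Y
        using less.hyps[of "[r]"] less.hyps[of "u # F'"] Cons by simp_all
      from weight show ?thesis
        unfolding Cons by (rule pairB_append_right_Cons[OF r u])
    qed
  qed
qed

lemma pairB_commute: "(pairB F G :: 'k::comm_ring_1) = pairB G F"
proof (induction "weight F + weight G" arbitrary: F G rule: less_induct)
  case less
  have swap: "(pairB (t # F') G' :: 'k) = pairB G' (t # F')"
    if "F' \<noteq> []" and le: "weight (t # F') + weight G' \<le> weight F + weight G" for t F' G'
  proof -
    let ?k = "weight F'"
    from that have "0 < ?k"
      by (simp add: zero_less_iff_neq_zero)
    moreover have "weight (vtake ?k G') \<le> weight G'" "weight (vdrop ?k G') \<le> weight G'"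
      by simp_all
    moreover have "weight (t # F') = tree_weight t + ?k" "weight [t] = tree_weight t"
      by simp_all
    moreover note tree_weight_pos[of t]
    ultimately have "weight F' + weight (vtake ?k G') < weight F + weight G"
      and "weight [t] + weight (vdrop ?k G') < weight F + weight G"
      using le by linarith+
    then have "(pairB F' (vtake ?k G') :: 'k) = pairB (vtake ?k G') F'"
      and "(pairB [t] (vdrop ?k G') :: 'k) = pairB (vdrop ?k G') [t]"
      by (simp_all add: less.hyps)
    then show ?thesis
      using pairB_Cons[of t F' G'] pairB_append_right[of G' "[t]" F'] by (metis append.simps)
  qed
  show ?case
  proof (cases F rule: forest_cases)
    case (Cons t u F')
    then show ?thesis
      using swap[of "u # F'" t G] by simp
  next
    case F: Nil
    then show ?thesis
    proof (cases G rule: forest_cases)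
      case (Cons s u G')
      then show ?thesis
        using swap[of "u # G'" s F] by simp
    qed (simp_all add: pairB_Node)
  next
    case F: (Node a)
    then show ?thesis
    proof (cases G rule: forest_cases)
      case (Cons s u G')
      then show ?thesis
        using swap[of "u # G'" s F] by simp
    qed (auto simp: pairB_Node pairB_eq_0 dot_def)
  qed
qed

lemma supp_basis [simp]: "supp (basis x :: _ \<Rightarrow> 'k::zero_neq_one) = {x}"
  by (auto simp: supp_def basis_def)

lemma sum_supp_basis:
  assumes "fin v"
  shows "(\<Sum>x\<in>supp v. v x * basis y x) = (v y :: 'k::semiring_1)"
proof -
  have "(\<Sum>x\<in>supp v. v x * basis y x) = (\<Sum>x\<in>supp v. if x = y then v x else 0)"
    by (rule sum.cong) (simp_all add: basis_def)
  also have "\<dots> = v y"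
    using assms by (simp add: fin_def supp_def)
  finally show ?thesis .
qed

lemma fin_add: "fin v \<Longrightarrow> fin w \<Longrightarrow> fin (\<lambda>x. v x + w x :: 'k::comm_monoid_add)"
  unfolding fin_def by (rule finite_subset[of _ "supp v \<union> supp w"]) (auto simp: supp_def)

lemma fin_mult_left: "fin v \<Longrightarrow> fin (\<lambda>x. c * v x :: 'k::semiring_0)"
  unfolding fin_def by (rule finite_subset[of _ "supp v"]) (auto simp: supp_def)

definition pairing :: "(forest \<Rightarrow> 'k::comm_ring_1) \<Rightarrow> forest \<Rightarrow> 'k" where
  "pairing v G = (\<Sum>x\<in>supp v. v x * pairB x G)"

lemma pair_basis: "pair v (basis G) = pairing v G"
  unfolding pair_def pairing_def supp_basis by (simp add: basis_def)

lemma pairing_eq_sum: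
  assumes "finite S" "supp v \<subseteq> S"
  shows "pairing v G = (\<Sum>x\<in>S. v x * pairB x G)"
  unfolding pairing_def using assms by (intro sum.mono_neutral_left) (auto simp: supp_def)

lemma pairing_add:
  assumes "fin v" "fin w"
  shows "pairing (\<lambda>x. v x + w x) G = pairing v G + pairing w G"
proof -
  let ?S = "supp v \<union> supp w"
  have S: "finite ?S"
    using assms by (simp add: fin_def)
  then have "pairing (\<lambda>x. v x + w x) G = (\<Sum>x\<in>?S. (v x + w x) * pairB x G)"
    by (rule pairing_eq_sum) (auto simp: supp_def)
  also have "\<dots> = (\<Sum>x\<in>?S. v x * pairB x G) + (\<Sum>x\<in>?S. w x * pairB x G)"
    by (simp add: distrib_right sum.distrib)
  also have "\<dots> = pairing v G + pairing w G"
    using S by (simp add: pairing_eq_sum[OF S])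
  finally show ?thesis .
qed

lemma pairing_mult_left:
  assumes "fin v"
  shows "pairing (\<lambda>x. c * v x) G = c * pairing v G"
proof -
  have "pairing (\<lambda>x. c * v x) G = (\<Sum>x\<in>supp v. c * v x * pairB x G)"
    using assms by (intro pairing_eq_sum) (auto simp: fin_def supp_def)
  then show ?thesis
    by (simp add: pairing_def sum_distrib_left mult.assoc)
qed

lemma pairing_basis: "pairing (basis x) = pairB x"
  unfolding pairing_def supp_basis by (simp add: fun_eq_iff basis_def)

lemma sum_pairing_swap: "(\<Sum>x\<in>supp v. v x * pairing w x) = (\<Sum>y\<in>supp w. w y * pairing v y)"
  unfolding pairing_def sum_distrib_left
  by (subst sum.swap) (simp add: pairB_commute ac_simps)

lemma Bplus_Node [simp]: "Bplus v [Node F] = v F"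
proof -
  have "{x. v x \<noteq> 0 \<and> [Node x] = [Node F]} = (if v F = 0 then {} else {F})"
    by auto
  then show ?thesis
    by (simp add: Bplus_def push_def)
qed

lemma Bplus_not_tree:
  assumes "\<And>F. G \<noteq> [Node F]"
  shows "Bplus v G = 0"
proof -
  from assms have "{x. v x \<noteq> 0 \<and> [Node x] = G} = {}"
    by auto
  then show ?thesis
    unfolding Bplus_def push_def by (simp only: sum.empty)
qed

lemma supp_Bplus: "supp (Bplus v) = (\<lambda>F. [Node F]) ` supp v"
proof (intro equalityI subsetI)
  fix G assume G: "G \<in> supp (Bplus v)"
  then obtain F where "G = [Node F]"
    using Bplus_not_tree unfolding supp_def by blast
  with G show "G \<in> (\<lambda>F. [Node F]) ` supp v"
    by (simp add: supp_def)
qed (auto simp: supp_def)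

lemma fin_Bplus: "fin v \<Longrightarrow> fin (Bplus v)"
  by (simp add: fin_def supp_Bplus)

lemma pairing_Bplus:
  "pairing (Bplus v) G = (case G of [] \<Rightarrow> 0 | s # G' \<Rightarrow> if s = dot then pairing v G' else 0)"
proof -
  have "inj_on (\<lambda>F. [Node F]) (supp v)"
    by (auto simp: inj_on_def)
  then have "pairing (Bplus v) G = (\<Sum>F\<in>supp v. v F * pairB [Node F] G)"
    by (simp add: pairing_def supp_Bplus sum.reindex)
  then show ?thesis
    by (cases G) (simp_all add: pairB_Node pairing_def)
qed

definition mult :: "(forest \<Rightarrow> 'k::comm_ring_1) \<Rightarrow> (forest \<Rightarrow> 'k) \<Rightarrow> forest \<Rightarrow> 'k" where
  "mult v w F = (\<Sum>(x, z)\<in>supp v \<times> supp w. if x @ z = F then v x * w z else 0)"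

lemma supp_mult: "supp (mult v w) \<subseteq> (\<lambda>(x, z). x @ z) ` (supp v \<times> supp w)"
proof
  fix F assume "F \<in> supp (mult v w)"
  then obtain q where "q \<in> supp v \<times> supp w" "(case q of (x, z) \<Rightarrow> if x @ z = F then v x * w z else 0) \<noteq> 0"
    unfolding supp_def mult_def by (auto elim: sum.not_neutral_contains_not_neutral)
  then show "F \<in> (\<lambda>(x, z). x @ z) ` (supp v \<times> supp w)"
    by (auto split: if_splits)
qed

lemma fin_mult: "fin v \<Longrightarrow> fin w \<Longrightarrow> fin (mult v w)"
  unfolding fin_def by (rule finite_subset[OF supp_mult]) simp

lemma pairB_append_sum:
  "(pairB (F @ G) H :: 'k::comm_ring_1) = (\<Sum>k\<le>weight H. pairB G (vtake k H) * pairB F (vdrop k H))"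
proof -
  have "(\<Sum>k\<le>weight H. pairB G (vtake k H) * pairB F (vdrop k H) :: 'k)
      = (\<Sum>k\<le>weight H. if k = weight G then pairB G (vtake k H) * pairB F (vdrop k H) else 0)"
    by (rule sum.cong) (simp_all add: pairB_eq_0)
  also have "\<dots> = pairB (F @ G) H"
    by (auto simp: pairB_append pairB_eq_0 vtake_all)
  finally show ?thesis ..
qed

lemma pairing_mult:
  assumes "fin v" "fin w"
  shows "pairing (mult v w) G = (\<Sum>k\<le>weight G. pairing w (vtake k G) * pairing v (vdrop k G))"
proof -
  let ?Q = "supp v \<times> supp w" and ?I = "(\<lambda>(x, z). x @ z) ` (supp v \<times> supp w)"
  have I: "finite ?I"
    using assms by (simp add: fin_def)
  have "pairing (mult v w) G = (\<Sum>F\<in>?I. mult v w F * pairB F G)"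
    by (rule pairing_eq_sum[OF I supp_mult])
  also have "\<dots> = (\<Sum>F\<in>?I. \<Sum>q\<in>?Q. if fst q @ snd q = F then v (fst q) * w (snd q) * pairB F G else 0)"
    unfolding mult_def sum_distrib_right by (intro sum.cong) (auto simp: case_prod_beta)
  also have "\<dots> = (\<Sum>q\<in>?Q. \<Sum>F\<in>?I. if fst q @ snd q = F then v (fst q) * w (snd q) * pairB F G else 0)"
    by (rule sum.swap)
  also have "\<dots> = (\<Sum>(x, z)\<in>?Q. v x * w z * pairB (x @ z) G)"
    using I by (intro sum.cong) auto
  also have "\<dots> = (\<Sum>k\<le>weight G. \<Sum>(x, z)\<in>?Q. (w z * pairB z (vtake k G)) * (v x * pairB x (vdrop k G)))"
    unfolding pairB_append_sum sum_distrib_left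
    by (subst sum.swap) (simp add: case_prod_beta ac_simps)
  also have "\<dots> = (\<Sum>k\<le>weight G. pairing w (vtake k G) * pairing v (vdrop k G))"
    by (simp add: pairing_def sum_product sum.cartesian_product case_prod_beta ac_simps)
  finally show ?thesis .
qed

lemma mult_eq_sum_splits:
  assumes "fin v" "fin w"
  shows "mult v w F = (\<Sum>(x, z)\<in>{(x, z). x @ z = F}. v x * w z)"
proof -
  have "{(x, z). x @ z = F} \<subseteq> (\<lambda>i. (take i F, drop i F)) ` {..length F}"
  proof
    fix q assume "q \<in> {(x, z). x @ z = F}"
    then show "q \<in> (\<lambda>i. (take i F, drop i F)) ` {..length F}"
      by (intro image_eqI[where x = "length (fst q)"]) auto
  qed
  then have splits: "finite {(x, z). x @ z = F}"
    by (rule finite_subset) simp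
  have "mult v w F = (\<Sum>(x, z)\<in>{q \<in> supp v \<times> supp w. fst q @ snd q = F}. v x * w z)"
    using assms by (simp add: mult_def fin_def sum.inter_filter case_prod_beta)
  also have "\<dots> = (\<Sum>(x, z)\<in>{(x, z). x @ z = F}. v x * w z)"
    by (rule sum.mono_neutral_left[OF splits]) (auto simp: supp_def)
  finally show ?thesis .
qed

definition representable :: "(forest \<Rightarrow> 'k::comm_ring_1) \<Rightarrow> bool" where
  "representable \<phi> \<longleftrightarrow> (\<exists>v. fin v \<and> pairing v = \<phi>)"

lemma representable_pairB: "representable (pairB x)"
  unfolding representable_def
  by (intro exI[where x = "basis x"]) (simp add: fin_def pairing_basis)

lemma representable_add:
  assumes "representable \<phi>" "representable \<psi>"
  shows "representable (\<lambda>G. \<phi> G + \<psi> G)"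
proof -
  from assms obtain v w where "fin v" "\<phi> = pairing v" "fin w" "\<psi> = pairing w"
    by (auto simp: representable_def)
  then show ?thesis
    unfolding representable_def
    by (intro exI[where x = "\<lambda>x. v x + w x"]) (simp add: fin_add pairing_add fun_eq_iff)
qed

lemma representable_mult_left:
  assumes "representable \<phi>"
  shows "representable (\<lambda>G. c * \<phi> G)"
proof -
  from assms obtain v where "fin v" "\<phi> = pairing v"
    by (auto simp: representable_def)
  then show ?thesis
    unfolding representable_def
    by (intro exI[where x = "\<lambda>x. c * v x"]) (simp add: fin_mult_left pairing_mult_left fun_eq_iff)
qed

lemma representable_diff:
  "representable \<phi> \<Longrightarrow> representable \<psi> \<Longrightarrow> representable (\<lambda>G. \<phi> G - \<psi> G)"
  using representable_add[of \<phi> "\<lambda>G. - 1 * \<psi> G"] representable_mult_left[of \<psi> "- 1"] by simp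

lemma representable_sum:
  "finite S \<Longrightarrow> (\<And>H. H \<in> S \<Longrightarrow> representable (\<phi> H)) \<Longrightarrow> representable (\<lambda>G. \<Sum>H\<in>S. \<phi> H G)"
proof (induction S rule: finite_induct)
  case empty
  have "fin (\<lambda>_. 0)" "pairing (\<lambda>_. 0) = (\<lambda>_. 0)"
    by (simp_all add: fun_eq_iff fin_def pairing_def supp_def)
  then show ?case
    unfolding representable_def by auto
next
  case (insert H S)
  then show ?case
    using representable_add[of "\<phi> H" "\<lambda>G. \<Sum>H\<in>S. \<phi> H G"] by simp
qed

lemma representable_shift:
  assumes "representable \<phi>"
  shows "representable (\<lambda>G. case G of [] \<Rightarrow> 0 | s # G' \<Rightarrow> if s = dot then \<phi> G' else 0)"
proof -
  from assms obtain v where v: "fin v" "\<phi> = pairing v"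
    by (auto simp: representable_def)
  then show ?thesis
    unfolding representable_def v(2)
    by (intro exI[where x = "Bplus v"]) (simp add: fin_Bplus pairing_Bplus fun_eq_iff)
qed

lemma representable_cut_sum:
  assumes "representable \<phi>" "representable \<psi>"
  shows "representable (\<lambda>G. \<Sum>k\<le>weight G. \<phi> (vtake k G) * \<psi> (vdrop k G))"
proof -
  from assms obtain v w where "fin v" "pairing v = \<phi>" "fin w" "pairing w = \<psi>"
    by (auto simp: representable_def)
  then show ?thesis
    unfolding representable_def
    by (intro exI[where x = "mult w v"]) (simp add: fin_mult pairing_mult fun_eq_iff)
qed

lemma sum_basis_cuts:
  "(\<Sum>k\<le>weight G. basis a (vtake k G) * basis b (vdrop k G)) = (of_bool ((a, b) \<in> cuts G) :: 'k::comm_ring_1)"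
proof -
  have "(\<Sum>k\<le>weight G. basis a (vtake k G) * basis b (vdrop k G))
      = (\<Sum>k\<le>weight G. basis (a, b) (vtake k G, vdrop k G) :: 'k)"
    by (rule sum.cong) (simp_all add: basis_def)
  also have "\<dots> = (\<Sum>p\<in>cuts G. if p = (a, b) then 1 else 0)"
    by (simp add: cuts_def sum.reindex[OF inj_on_cut] basis_def)
  also have "\<dots> = of_bool ((a, b) \<in> cuts G)"
    by (simp add: cuts_def)
  finally show ?thesis .
qed

lemma weight_cut: "(a, b) \<in> cuts G \<Longrightarrow> weight G = weight a + weight b"
  by (auto simp: cuts_def)

fun first_weight :: "forest \<Rightarrow> nat" where
  "first_weight [] = 0"
| "first_weight (t # _) = tree_weight t"

lemma cut_before_dot_in_cuts: "(cs, dot # F) \<in> cuts (Node cs # F)"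
  using cut_in_cuts[of "weight cs" "Node cs # F"] by (simp add: vtake_all vdrop_all dot_def)

lemma cut_before_dot:
  assumes "(cs, dot # F) \<in> cuts G"
  shows "G = Node cs # F \<or> first_weight G < tree_weight (Node cs)"
proof -
  from assms obtain k where k: "k \<le> weight G" "vtake k G = cs" "vdrop k G = dot # F"
    by (auto simp: cuts_def)
  then have "k = weight cs"
    by (metis weight_vtake min.absorb1)
  from k(3) obtain d G' where G: "G = Node d # G'"
    by (metis vdrop.simps(1) list.distinct(1) neq_Nil_conv ptree.exhaust)
  show ?thesis
  proof (cases "tree_weight (Node d) \<le> k")
    case True
    with G \<open>k = weight cs\<close> show ?thesis
      by simp
  next
    case False
    with G k have "vtake k d = cs" "vdrop k d = []" "G' = F"
      by (simp_all add: dot_def)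
    then have "d = cs"
      by (metis diff_is_0_eq vtake_all weight_eq_0_iff weight_vdrop)
    with G \<open>G' = F\<close> show ?thesis
      by simp
  qed
qed

lemma representable_basis_triangular:
  fixes \<phi> :: "forest \<Rightarrow> 'k::comm_ring_1"
  assumes "representable \<phi>" "\<phi> z = 1" "finite {H. \<phi> H \<noteq> 0}"
    and lower: "\<And>H. \<phi> H \<noteq> 0 \<Longrightarrow> H \<noteq> z \<Longrightarrow> representable (basis H :: forest \<Rightarrow> 'k)"
  shows "representable (basis z :: forest \<Rightarrow> 'k)"
proof -
  define S where "S = {H. \<phi> H \<noteq> 0} - {z}"
  have "finite S"
    using assms(3) by (simp add: S_def)
  with lower have "representable (\<lambda>G. \<Sum>H\<in>S. \<phi> H * basis H G)"
    by (intro representable_sum representable_mult_left) (auto simp: S_def)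
  with assms(1) have "representable (\<lambda>G. \<phi> G - (\<Sum>H\<in>S. \<phi> H * basis H G))"
    by (rule representable_diff)
  moreover have "\<phi> G - (\<Sum>H\<in>S. \<phi> H * basis H G) = basis z G" for G
  proof -
    have "(\<Sum>H\<in>S. \<phi> H * basis H G) = (\<Sum>H\<in>S. if H = G then \<phi> H else 0)"
      by (rule sum.cong) (simp_all add: basis_def)
    also have "\<dots> = (if G \<in> S then \<phi> G else 0)"
      using \<open>finite S\<close> by simp
    finally show ?thesis
      using assms(2) by (auto simp: S_def basis_def)
  qed
  ultimately show ?thesis
    by simp
qed

lemma representable_basis: "representable (basis z :: forest \<Rightarrow> 'k::comm_ring_1)"
proof (induction z rule: wf_induct_rule[OF wf_measures[of "[weight, first_weight]"]])
  case (1 z)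
  have IH: "representable (basis y :: forest \<Rightarrow> 'k)"
    if "weight y < weight z \<or> weight y = weight z \<and> first_weight y < first_weight z" for y
    using 1 that by simp
  consider "z = []" | F where "z = dot # F" | cs F where "cs \<noteq> []" "z = Node cs # F"
    by (metis dot_def neq_Nil_conv ptree.exhaust)
  then show ?case
  proof cases
    case 1
    then show ?thesis
      using representable_pairB[of "[]"] by (simp add: basis_def fun_eq_iff)
  next
    case (2 F)
    then have "(basis z :: forest \<Rightarrow> 'k)
        = (\<lambda>G. case G of [] \<Rightarrow> 0 | s # G' \<Rightarrow> if s = dot then basis F G' else 0)"
      by (auto simp: basis_def fun_eq_iff split: list.split)
    moreover have "representable (basis F :: forest \<Rightarrow> 'k)"
      using 2 by (intro IH) simp
    ultimately show ?thesis
      by (simp add: representable_shift)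
  next
    case (3 cs F)
    define \<phi> :: "forest \<Rightarrow> 'k" where "\<phi> = (\<lambda>G. of_bool ((cs, dot # F) \<in> cuts G))"
    have "weight cs > 0"
      using 3 by (simp add: zero_less_iff_neq_zero)
    with 3 have "representable (\<lambda>G. \<Sum>k\<le>weight G. basis cs (vtake k G) * basis (dot # F) (vdrop k G) :: 'k)"
      by (intro representable_cut_sum IH) simp_all
    then have "representable \<phi>"
      by (simp add: \<phi>_def sum_basis_cuts)
    moreover have "\<phi> z = 1"
      using 3 cut_before_dot_in_cuts by (simp add: \<phi>_def)
    moreover have weight_\<phi>: "weight H = weight z" if "\<phi> H \<noteq> 0" for H
      using that 3 by (auto simp: \<phi>_def dot_def dest: weight_cut)
    then have "finite {H. \<phi> H \<noteq> 0}"
      by (auto intro: finite_subset[OF _ finite_weight_le[of "weight z"]])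
    moreover have "representable (basis H :: forest \<Rightarrow> 'k)" if "\<phi> H \<noteq> 0" "H \<noteq> z" for H
    proof (rule IH)
      from that have "(cs, dot # F) \<in> cuts H"
        by (auto simp: \<phi>_def)
      with that 3 show "weight H < weight z \<or> weight H = weight z \<and> first_weight H < first_weight z"
        using cut_before_dot weight_\<phi> by fastforce
    qed
    ultimately show ?thesis
      by (rule representable_basis_triangular)
  qed
qed

lemma pairing_inj:
  fixes v w :: "forest \<Rightarrow> 'k::comm_ring_1"
  assumes "fin v" "fin w" "pairing v = pairing w"
  shows "v = w"
proof
  fix y
  obtain u :: "forest \<Rightarrow> 'k" where u: "fin u" "pairing u = basis y"
    using representable_basis[of y] by (auto simp: representable_def)
  have "v y = (\<Sum>x\<in>supp u. u x * pairing v x)" if "fin v" for v :: "forest \<Rightarrow> 'k"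
  proof -
    have "v y = (\<Sum>x\<in>supp v. v x * pairing u x)"
      by (simp only: u(2) sum_supp_basis[OF that])
    also have "\<dots> = (\<Sum>x\<in>supp u. u x * pairing v x)"
      by (rule sum_pairing_swap)
    finally show ?thesis .
  qed
  from this[OF assms(1)] this[OF assms(2)] assms(3) show "v y = w y"
    by simp
qed

lemma fin_fdual_pairing_fdual:
  "fin (fdual F :: forest \<Rightarrow> 'k::field) \<and> pairing (fdual F :: forest \<Rightarrow> 'k) = basis F"
proof -
  have char: "(\<forall>G. pair v (basis G) = (if G = F then 1 else 0)) \<longleftrightarrow> pairing v = basis F"
    for v :: "forest \<Rightarrow> 'k"
    unfolding pair_basis by (auto simp: basis_def fun_eq_iff)
  obtain u :: "forest \<Rightarrow> 'k" where "fin u" "pairing u = basis F"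
    using representable_basis[of F] by (auto simp: representable_def)
  then have "\<exists>!v :: forest \<Rightarrow> 'k. fin v \<and> (\<forall>G. pair v (basis G) = (if G = F then 1 else 0))"
    unfolding char by (auto intro: pairing_inj)
  then show ?thesis
    unfolding fdual_def char[symmetric] by (rule theI')
qed

lemma fin_fdual: "fin (fdual F :: forest \<Rightarrow> 'k::field)"
  using fin_fdual_pairing_fdual by blast

lemma pairing_fdual: "pairing (fdual F :: forest \<Rightarrow> 'k::field) = basis F"
  using fin_fdual_pairing_fdual by blast

lemma fdual_unique: "fin v \<Longrightarrow> pairing v = basis F \<Longrightarrow> fdual F = (v :: forest \<Rightarrow> 'k::field)"
  by (rule pairing_inj) (simp_all add: fin_fdual pairing_fdual)

text \<open>The type annotation inside \<open>supp\<close> is essential: otherwise that occurrence of \<open>fdual F\<close>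
  gets a type of its own.\<close>
lemma coeff_eq_sum_fdual:
  assumes "fin v"
  shows "v F = (\<Sum>x\<in>supp (fdual F :: forest \<Rightarrow> 'k). fdual F x * pairing v x :: 'k::field)"
proof -
  have "v F = (\<Sum>y\<in>supp v. v y * pairing (fdual F) y)"
    by (simp only: pairing_fdual sum_supp_basis[OF assms])
  also have "\<dots> = (\<Sum>x\<in>supp (fdual F :: forest \<Rightarrow> 'k). fdual F x * pairing v x)"
    by (rule sum_pairing_swap)
  finally show ?thesis .
qed

lemma fdual_commute: "(fdual F G :: 'k::field) = fdual G F"
proof -
  have "(fdual G F :: 'k) = (\<Sum>x\<in>supp (fdual F :: forest \<Rightarrow> 'k). fdual F x * basis G x)"
    by (rule trans[OF coeff_eq_sum_fdual[OF fin_fdual]]) (simp only: pairing_fdual)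
  also have "\<dots> = fdual F G"
    by (rule sum_supp_basis[OF fin_fdual])
  finally show ?thesis ..
qed

lemma Bplus_fdual: "Bplus (fdual F :: forest \<Rightarrow> 'k::field) = fdual (dot # F)"
proof (rule fdual_unique[symmetric])
  show "fin (Bplus (fdual F :: forest \<Rightarrow> 'k))"
    by (rule fin_Bplus[OF fin_fdual])
  show "pairing (Bplus (fdual F :: forest \<Rightarrow> 'k)) = basis (dot # F)"
  proof
    fix G
    show "pairing (Bplus (fdual F :: forest \<Rightarrow> 'k)) G = basis (dot # F) G"
      by (cases G) (simp_all add: pairing_Bplus pairing_fdual basis_def)
  qed
qed

lemma gammaB_apply: "gammaB x H = basis (dot # H) x"
  by (cases x) (auto simp: basis_def)

lemma gamma_apply:
  assumes "fin v"
  shows "gamma v H = (v (dot # H) :: 'k::comm_ring_1)"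
proof -
  have "gamma v H = (\<Sum>x\<in>supp v. v x * basis (dot # H) x)"
    by (simp add: gamma_def lin_def gammaB_apply)
  then show ?thesis
    by (simp add: sum_supp_basis[OF assms])
qed

lemma gamma_fdual:
  "gamma (fdual F :: forest \<Rightarrow> 'k::field) = (if \<exists>t. F = [t] then fdual (children (hd F)) else (\<lambda>_. 0))"
proof
  fix H
  have "gamma (fdual F :: forest \<Rightarrow> 'k) H = Bplus (fdual H) F"
    by (simp add: gamma_apply[OF fin_fdual] fdual_commute[of F] Bplus_fdual)
  also have "\<dots> = (if \<exists>t. F = [t] then fdual (children (hd F)) else (\<lambda>_. 0)) H"
  proof (cases "\<exists>c. F = [Node c]")
    case True
    then show ?thesis
      by (auto simp: fdual_commute)
  next
    case False
    moreover from False have "\<not> (\<exists>t. F = [t])"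
      by (metis ptree.exhaust)
    ultimately show ?thesis
      by (auto intro: Bplus_not_tree)
  qed
  finally show "gamma (fdual F :: forest \<Rightarrow> 'k) H = (if \<exists>t. F = [t] then fdual (children (hd F)) else (\<lambda>_. 0)) H" .
qed

lemma Delta_fdual:
  "Delta (fdual F :: forest \<Rightarrow> 'k::field)
     = (\<lambda>p. \<Sum>(F1, F2)\<in>{(F1, F2). F1 @ F2 = F}. fdual F2 (fst p) * fdual F1 (snd p))"
proof
  fix p :: "forest \<times> forest"
  obtain a b where p: "p = (a, b)"
    by (cases p)
  let ?m = "mult (fdual b) (fdual a) :: forest \<Rightarrow> 'k"
  have deltaB: "deltaB x (a, b) = pairing ?m x" for x
    by (simp add: deltaB_eq_cuts sum_basis_cuts[symmetric] fin_fdual pairing_fdual fin_mult pairing_mult)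
  have "Delta (fdual F :: forest \<Rightarrow> 'k) (a, b) = (\<Sum>x\<in>supp (fdual F :: forest \<Rightarrow> 'k). fdual F x * pairing ?m x)"
    by (simp add: Delta_def lin_def deltaB)
  also have "\<dots> = ?m F"
    by (rule coeff_eq_sum_fdual[symmetric]) (simp add: fin_mult fin_fdual)
  also have "\<dots> = (\<Sum>(F1, F2)\<in>{(F1, F2). F1 @ F2 = F}. fdual F2 a * fdual F1 b)"
    by (simp add: mult_eq_sum_splits fin_fdual fdual_commute[of _ a] fdual_commute[of _ b] mult.commute)
  finally show "Delta (fdual F :: forest \<Rightarrow> 'k) p
      = (\<Sum>(F1, F2)\<in>{(F1, F2). F1 @ F2 = F}. fdual F2 (fst p) * fdual F1 (snd p))"
    by (simp add: p)
qed

theorem proposition21: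
  fixes F :: forest
  shows "Bplus (fdual F :: forest \<Rightarrow> 'k::field) = fdual (dot # F)
    \<and> gamma (fdual F :: forest \<Rightarrow> 'k::field) =
           (if (\<exists>t. F = [t]) then fdual (children (hd F)) else (\<lambda>_. 0))
    \<and> Delta (fdual F :: forest \<Rightarrow> 'k::field) =
           (\<lambda>p. \<Sum>(F1, F2)\<in>{(F1, F2). F1 @ F2 = F}.
                   (fdual F2 :: forest \<Rightarrow> 'k) (fst p) * fdual F1 (snd p))"
  using Bplus_fdual gamma_fdual Delta_fdual by blast

end
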